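(* Let $\mathcal{F}\subseteq\mathcal{P}(\omega)$ be a free filter and let $D\subseteq(-1,1)^\omega$ be a countable set. Then there exists a homeomorphism $h\colon Q\to Q$ of $Q=[-1,1]^\omega$ such that $h[D]$ is in general position, $h[(-1,1)^\omega]=(-1,1)^\omega$ and $h[K_\mathcal{F}]=K_\mathcal{F}$.
   Context: A filter on $\omega$ is free if it contains all cofinite sets. $Q=[-1,1]^\omega$ has the product topology. $K_\mathcal{F}=\{f\in Q:\forall m\in\omega\ \{n\in\omega:|f(n)|<2^{-m}\}\in\mathcal{F}\}$. A set $X\subseteq Q$ is in general position if for all $x,y\in X$ with $x\ne y$ one has $x(n)\ne y(n)$ for every $n\in\omega$. *)

theory Defs
  imports "HOL-Analysis.Analysis"
begin

definition is_filter_on_nat :: "nat set set \<Rightarrow> bool" where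
  "is_filter_on_nat F \<longleftrightarrow> UNIV \<in> F \<and> {} \<notin> F \<and>
     (\<forall>A B. A \<in> F \<longrightarrow> A \<subseteq> B \<longrightarrow> B \<in> F) \<and>
     (\<forall>A B. A \<in> F \<longrightarrow> B \<in> F \<longrightarrow> A \<inter> B \<in> F)"

definition free_filter :: "nat set set \<Rightarrow> bool" where
  "free_filter F \<longleftrightarrow> is_filter_on_nat F \<and> (\<forall>A. finite (UNIV - A) \<longrightarrow> A \<in> F)"

definition Qcube :: "(nat \<Rightarrow> real) set" where
  "Qcube = PiE UNIV (\<lambda>_. {-1..1})"

definition Qtop :: "(nat \<Rightarrow> real) topology" where
  "Qtop = subtopology (product_topology (\<lambda>_. euclideanreal) UNIV) Qcube"

definition Qopen :: "(nat \<Rightarrow> real) set" where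
  "Qopen = PiE UNIV (\<lambda>_. {-1<..<1})"

definition K_filter :: "nat set set \<Rightarrow> (nat \<Rightarrow> real) set" where
  "K_filter F = {f \<in> Qcube. \<forall>m::nat. {n. \<bar>f n\<bar> < (1/2) ^ m} \<in> F}"

definition general_position :: "(nat \<Rightarrow> real) set \<Rightarrow> bool" where
  "general_position X \<longleftrightarrow> (\<forall>x\<in>X. \<forall>y\<in>X. x \<noteq> y \<longrightarrow> (\<forall>n. x n \<noteq> y n))"

end

theory Submission
  imports Defs "HOL-Complex_Analysis.Complex_Analysis"
begin

text \<open>For \<open>\<bar>c\<bar> \<le> 1/2\<close> the map \<open>v \<mapsto> v + c (1 - v\<^sup>2)\<close> is an increasing homeomorphism
  of \<open>[-1,1]\<close> that fixes \<open>\<plusminus>1\<close> and moves points by at most \<open>\<bar>c\<bar>\<close>. Bending every coordinate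
  this way, with parameters that tend to \<open>0\<close> along the coordinates, preserves \<open>(-1,1)\<^sup>\<omega>\<close>,
  and also \<open>K\<^sub>F\<close>, which is stable under coordinatewise null perturbations since \<open>F\<close> is free.

  Two such maps suffice. The first bends only coordinate \<open>0\<close>, by \<open>(\<Sum>j\<ge>1. t\<^sup>j x\<^sub>j) / 2\<close>;
  the new coordinate \<open>0\<close> is then a power series in \<open>t\<close> whose coefficients determine \<open>x\<close>, so
  two distinct points of \<open>D\<close> get the same coordinate \<open>0\<close> for only finitely many
  \<open>t \<in> [0,1/2]\<close>, and a \<open>t\<close> outside this countable set separates all first coordinates. The
  second bends coordinate \<open>n \<ge> 1\<close> by \<open>s x\<^sub>0 / 2\<^sup>n\<close>; for points with distinct first
  coordinates, agreement in coordinate \<open>n\<close> is a nontrivial affine equation in \<open>s\<close>, so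
  again all but countably many \<open>s\<close> yield general position.\<close>

lemma finite_zeros_eval_fps:
  fixes F :: "complex fps"
  assumes "F \<noteq> 0" and "compact K" and K: "K \<subseteq> eball 0 (fps_conv_radius F)"
  shows "finite {z \<in> K. eval_fps F z = 0}"
proof (cases "K = {}")
  case False
  let ?S = "eball 0 (fps_conv_radius F)"
  have radius: "0 < fps_conv_radius F"
    using False K by auto
  have holo: "eval_fps F holomorphic_on ?S"
    by (rule holomorphic_on_eval_fps) simp
  show ?thesis
  proof (cases "eval_fps F constant_on ?S")
    case True
    have "0 \<in> ?S" using radius by (simp add: zero_ereal_def)
    then have const: "eval_fps F z = eval_fps F 0" if "z \<in> ?S" for z
      using True that by (auto simp: constant_on_def)
    have "eval_fps F 0 \<noteq> 0"
    proof
      assume "eval_fps F 0 = 0"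
      then have "eval_fps F has_fps_expansion 0"
        unfolding has_fps_expansion_0_iff eventually_nhds
        using \<open>0 \<in> ?S\<close> const by (intro exI[of _ ?S]) auto
      moreover have "eval_fps F has_fps_expansion F"
        using radius by (rule eval_fps_has_fps_expansion)
      ultimately show False
        using fps_expansion_unique_complex \<open>F \<noteq> 0\<close> by blast
    qed
    then have "eval_fps F z \<noteq> 0" if "z \<in> K" for z
      using const[of z] K that by auto
    then have "{z \<in> K. eval_fps F z = 0} = {}" by auto
    then show ?thesis by (metis finite.emptyI)
  next
    case False
    then show ?thesis
      using holomorphic_compact_finite_zeros[OF holo open_eball connected_eball assms(2) K] by simp
  qed
qed simp

lemma finite_zeros_real_power_series:
  fixes d :: "nat \<Rightarrow> real"
  assumes bounded: "\<And>j. \<bar>d j\<bar> \<le> B" and "d k \<noteq> 0" and "r < 1"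
  shows "finite {t. \<bar>t\<bar> \<le> r \<and> (\<Sum>j. d j * t^j) = 0}"
proof -
  define F where "F = Abs_fps (\<lambda>j. complex_of_real (d j))"
  have summable: "summable (\<lambda>j. d j * t^j)" if "\<bar>t\<bar> < 1" for t
  proof (rule summable_comparison_test')
    show "summable (\<lambda>j. B * \<bar>t\<bar>^j)" using that by (intro summable_mult summable_geometric) auto
    show "norm (d j * t^j) \<le> B * \<bar>t\<bar>^j" for j
      using bounded[of j] by (simp add: abs_mult power_abs mult_right_mono)
  qed
  have radius: "1 \<le> fps_conv_radius F"
    unfolding fps_conv_radius_def
  proof (rule conv_radius_geI_ex')
    fix r :: real assume "0 < r" "ereal r < 1"
    then have "summable (\<lambda>j. d j * r^j)" using summable by simp
    then have "summable (\<lambda>j. complex_of_real (d j * r^j))"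
      by (rule summable_of_real)
    then show "summable (\<lambda>j. fps_nth F j * of_real r ^ j)"
      by (simp add: F_def)
  qed
  have eval: "eval_fps F (of_real t) = of_real (\<Sum>j. d j * t^j)" if "\<bar>t\<bar> < 1" for t
  proof -
    have "eval_fps F (of_real t) = (\<Sum>j. complex_of_real (d j * t^j))"
      by (simp add: eval_fps_def F_def)
    also have "\<dots> = of_real (\<Sum>j. d j * t^j)"
      by (rule suminf_of_real[OF summable[OF that], symmetric])
    finally show ?thesis .
  qed
  have "F \<noteq> 0"
    using \<open>d k \<noteq> 0\<close> by (auto simp: F_def fps_eq_iff)
  moreover have "cball (0::complex) r \<subseteq> eball 0 (fps_conv_radius F)"
  proof
    fix z :: complex assume "z \<in> cball 0 r"
    then have "norm z < 1" using \<open>r < 1\<close> by simp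
    then have "ereal (norm z) < 1" by simp
    then show "z \<in> eball 0 (fps_conv_radius F)"
      using order_less_le_trans[OF _ radius] by simp
  qed
  ultimately have "finite (Re ` {z \<in> cball 0 r. eval_fps F z = 0})"
    by (intro finite_imageI finite_zeros_eval_fps) auto
  moreover have "{t. \<bar>t\<bar> \<le> r \<and> (\<Sum>j. d j * t^j) = 0} \<subseteq> Re ` {z \<in> cball 0 r. eval_fps F z = 0}"
  proof
    fix t assume "t \<in> {t. \<bar>t\<bar> \<le> r \<and> (\<Sum>j. d j * t^j) = 0}"
    then have "\<bar>t\<bar> \<le> r" "(\<Sum>j. d j * t^j) = 0" by auto
    then have "complex_of_real t \<in> {z \<in> cball 0 r. eval_fps F z = 0}"
      using eval \<open>r < 1\<close> by auto
    then show "t \<in> Re ` {z \<in> cball 0 r. eval_fps F z = 0}" by force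
  qed
  ultimately show ?thesis by (rule finite_subset[rotated])
qed

definition bend :: "real \<Rightarrow> real \<Rightarrow> real" where
  "bend c v = v + c * (1 - v\<^sup>2)"

lemma bend_zero [simp]: "bend 0 v = v"
  by (simp add: bend_def)

lemma bend_endpoints [simp]: "bend c 1 = 1" "bend c (-1) = -1"
  by (simp_all add: bend_def)

lemma continuous_on_bend [continuous_intros]:
  "continuous_on S c \<Longrightarrow> continuous_on S v \<Longrightarrow> continuous_on S (\<lambda>x. bend (c x) (v x))"
  unfolding bend_def by (intro continuous_intros)

lemma strict_mono_on_bend:
  assumes "\<bar>c\<bar> \<le> 1/2"
  shows "strict_mono_on {-1..1} (bend c)"
proof (rule strict_mono_onI)
  fix v w :: real assume "v \<in> {-1..1}" "w \<in> {-1..1}" "v < w"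
  then have "\<bar>v + w\<bar> < 2" by auto
  have "\<bar>c * (v + w)\<bar> \<le> 1/2 * \<bar>v + w\<bar>"
    using mult_right_mono[OF assms abs_ge_zero[of "v + w"]] by (simp add: abs_mult)
  also have "\<dots> < 1" using \<open>\<bar>v + w\<bar> < 2\<close> by simp
  finally have "\<bar>c * (v + w)\<bar> < 1" .
  then have "0 < (w - v) * (1 - c * (v + w))"
    using \<open>v < w\<close> by (intro mult_pos_pos) auto
  also have "(w - v) * (1 - c * (v + w)) = bend c w - bend c v"
    by (simp add: bend_def power2_eq_square algebra_simps)
  finally show "bend c v < bend c w" by simp
qed

lemma bend_inj_on: "\<bar>c\<bar> \<le> 1/2 \<Longrightarrow> inj_on (bend c) {-1..1}"
  by (rule strict_mono_on_imp_inj_on[OF strict_mono_on_bend])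

lemma bend_image:
  assumes "\<bar>c\<bar> \<le> 1/2"
  shows "bend c ` {-1..1} = {-1..1}"
proof
  show "bend c ` {-1..1} \<subseteq> {-1..1}"
    using strict_mono_on_leD[OF strict_mono_on_bend[OF assms], of "-1"]
      strict_mono_on_leD[OF strict_mono_on_bend[OF assms], of _ 1]
    by auto
  have "continuous_on {-1..1} (bend c)"
    by (intro continuous_intros)
  then show "{-1..1} \<subseteq> bend c ` {-1..1}"
    using IVT'[of "bend c" "-1" _ 1] by fastforce
qed

lemma bend_mem_open_iff:
  assumes "\<bar>c\<bar> \<le> 1/2" and v: "v \<in> {-1..1}"
  shows "bend c v \<in> {-1<..<1} \<longleftrightarrow> v \<in> {-1<..<1}"
proof -
  have open_iff: "u \<in> {-1<..<1} \<longleftrightarrow> u \<noteq> 1 \<and> u \<noteq> -1" if "u \<in> {-1..1}" for u :: real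
    using that by auto
  have "bend c v \<in> {-1..1}" using bend_image[OF assms(1)] v by blast
  moreover have "bend c v = 1 \<longleftrightarrow> v = 1"
    using inj_on_eq_iff[OF bend_inj_on[OF assms(1)] v, of 1] by simp
  moreover have "bend c v = -1 \<longleftrightarrow> v = -1"
    using inj_on_eq_iff[OF bend_inj_on[OF assms(1)] v, of "-1"] by simp
  ultimately show ?thesis
    using open_iff[OF v] open_iff[of "bend c v"] by blast
qed

lemma abs_bend_minus_le:
  assumes "v \<in> {-1..1}"
  shows "\<bar>bend c v - v\<bar> \<le> \<bar>c\<bar>"
proof -
  have "\<bar>1 - v\<^sup>2\<bar> \<le> 1" using assms abs_square_le_1[of v] by auto
  then show ?thesis
    using mult_left_mono[of _ 1 "\<bar>c\<bar>"] by (simp add: bend_def abs_mult)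
qed

lemma Qcube_iff: "x \<in> Qcube \<longleftrightarrow> (\<forall>n. x n \<in> {-1..1})"
  by (simp add: Qcube_def PiE_UNIV_domain Pi_iff)

lemma Qopen_iff: "x \<in> Qopen \<longleftrightarrow> (\<forall>n. x n \<in> {-1<..<1})"
  by (simp add: Qopen_def PiE_UNIV_domain Pi_iff)

lemma Qopen_subset_Qcube: "Qopen \<subseteq> Qcube"
  using less_imp_le by (fastforce simp: Qopen_iff Qcube_iff)

lemma K_filter_subset_Qcube: "K_filter F \<subseteq> Qcube"
  by (auto simp: K_filter_def)

lemma compact_Qcube: "compact Qcube"
proof -
  have "compactin (product_topology (\<lambda>_. euclideanreal) UNIV) Qcube"
    unfolding Qcube_def by (simp add: compactin_PiE)
  then show ?thesis by (simp add: euclidean_product_topology)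
qed

lemma Qtop_eq: "Qtop = top_of_set Qcube"
  by (simp add: Qtop_def euclidean_product_topology)

lemma K_filter_perturb:
  assumes F: "free_filter F" and x: "x \<in> K_filter F" and y: "y \<in> Qcube"
    and close: "\<And>n. \<bar>y n - x n\<bar> \<le> \<delta> n" and \<delta>: "\<delta> \<longlonglongrightarrow> 0"
  shows "y \<in> K_filter F"
  unfolding K_filter_def
proof (intro CollectI conjI allI y)
  fix m :: nat
  have upward: "\<And>A B. A \<in> F \<Longrightarrow> A \<subseteq> B \<Longrightarrow> B \<in> F"
    and inter: "\<And>A B. A \<in> F \<Longrightarrow> B \<in> F \<Longrightarrow> A \<inter> B \<in> F"
    and cofinite: "\<And>A. finite (UNIV - A) \<Longrightarrow> A \<in> F"
    using F by (auto simp: free_filter_def is_filter_on_nat_def)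
  let ?\<epsilon> = "(1/2::real) ^ Suc m"
  have x_small: "{n. \<bar>x n\<bar> < ?\<epsilon>} \<in> F" using x unfolding K_filter_def by blast
  have \<delta>_small: "{n. \<delta> n < ?\<epsilon>} \<in> F"
  proof (rule cofinite)
    have "eventually (\<lambda>n. \<delta> n < ?\<epsilon>) cofinite"
      using order_tendstoD(2)[OF \<delta>, of ?\<epsilon>] by (simp add: cofinite_eq_sequentially)
    then show "finite (UNIV - {n. \<delta> n < ?\<epsilon>})"
      by (simp add: eventually_cofinite Compl_eq_Diff_UNIV[symmetric] Collect_neg_eq)
  qed
  have "{n. \<bar>x n\<bar> < ?\<epsilon>} \<inter> {n. \<delta> n < ?\<epsilon>} \<subseteq> {n. \<bar>y n\<bar> < (1/2)^m}"
  proof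
    fix n assume "n \<in> {n. \<bar>x n\<bar> < ?\<epsilon>} \<inter> {n. \<delta> n < ?\<epsilon>}"
    then have "\<bar>x n\<bar> < ?\<epsilon>" "\<delta> n < ?\<epsilon>" by auto
    then have "\<bar>y n\<bar> < 2 * ?\<epsilon>" using close[of n] by linarith
    then show "n \<in> {n. \<bar>y n\<bar> < (1/2)^m}" by simp
  qed
  then show "{n. \<bar>y n\<bar> < (1/2)^m} \<in> F"
    by (rule upward[OF inter[OF x_small \<delta>_small]])
qed

lemma K_filter_perturb_iff:
  assumes "free_filter F" and "x \<in> Qcube" and "y \<in> Qcube"
    and "\<And>n. \<bar>y n - x n\<bar> \<le> \<delta> n" and "\<delta> \<longlonglongrightarrow> 0"
  shows "y \<in> K_filter F \<longleftrightarrow> x \<in> K_filter F"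
  using K_filter_perturb[of F x y \<delta>] K_filter_perturb[of F y x \<delta>] assms
  by (auto simp: abs_minus_commute)

definition Q_automorphism :: "nat set set \<Rightarrow> ((nat \<Rightarrow> real) \<Rightarrow> nat \<Rightarrow> real) \<Rightarrow> bool" where
  "Q_automorphism F h \<longleftrightarrow>
     homeomorphic_map Qtop Qtop h \<and> h ` Qopen = Qopen \<and> h ` K_filter F = K_filter F"

lemma Q_automorphism_comp:
  "Q_automorphism F f \<Longrightarrow> Q_automorphism F g \<Longrightarrow> Q_automorphism F (g \<circ> f)"
  unfolding Q_automorphism_def image_comp[symmetric] by (auto intro: homeomorphic_map_compose)

lemma image_eq_if_preserved:
  assumes "A \<subseteq> S" and "h ` S = S" and "\<And>x. x \<in> S \<Longrightarrow> h x \<in> A \<longleftrightarrow> x \<in> A"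
  shows "h ` A = A"
  using assms by (auto simp: image_iff) (metis image_iff subsetD)

lemma Q_automorphismI:
  assumes cont: "continuous_on Qcube h" and inj: "inj_on h Qcube" and onto: "h ` Qcube = Qcube"
    and preserves_Qopen: "\<And>x. x \<in> Qcube \<Longrightarrow> h x \<in> Qopen \<longleftrightarrow> x \<in> Qopen"
    and preserves_K: "\<And>x. x \<in> Qcube \<Longrightarrow> h x \<in> K_filter F \<longleftrightarrow> x \<in> K_filter F"
  shows "Q_automorphism F h"
proof -
  obtain g where "homeomorphism Qcube Qcube h g"
    using homeomorphism_compact[OF compact_Qcube cont onto inj] by blast
  then have "homeomorphic_maps Qtop Qtop h g"
    unfolding Qtop_eq by (force simp: homeomorphic_maps_def homeomorphism_def)
  then have "homeomorphic_map Qtop Qtop h"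
    using homeomorphic_map_maps by blast
  then show ?thesis
    unfolding Q_automorphism_def
    using image_eq_if_preserved[OF Qopen_subset_Qcube onto preserves_Qopen]
      image_eq_if_preserved[OF K_filter_subset_Qcube onto preserves_K]
    by simp
qed

lemma continuous_on_coordinate [continuous_intros]: "continuous_on S (\<lambda>x::nat \<Rightarrow> real. x i)"
  by (rule continuous_on_subset[OF continuous_on_product_coordinates]) auto

definition bend_map :: "(nat \<Rightarrow> (nat \<Rightarrow> real) \<Rightarrow> real) \<Rightarrow> (nat \<Rightarrow> real) \<Rightarrow> nat \<Rightarrow> real" where
  "bend_map c x = (\<lambda>n. bend (c n x) (x n))"

text \<open>The coordinates in \<open>U\<close> are left fixed and the bending parameters only depend on them,
  so \<open>x\<close> is recovered from \<open>bend_map c x\<close> by reading off \<open>x\<close> on \<open>U\<close> and then inverting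
  each bend separately.\<close>

context
  fixes c :: "nat \<Rightarrow> (nat \<Rightarrow> real) \<Rightarrow> real" and U :: "nat set"
  assumes bend_small: "\<And>n x. x \<in> Qcube \<Longrightarrow> \<bar>c n x\<bar> \<le> 1/2"
    and fixed: "\<And>n x. n \<in> U \<Longrightarrow> c n x = 0"
    and depends: "\<And>n x y. x \<in> Qcube \<Longrightarrow> y \<in> Qcube \<Longrightarrow> (\<And>j. j \<in> U \<Longrightarrow> x j = y j) \<Longrightarrow> c n x = c n y"
begin

lemma bend_map_in_Qcube:
  assumes "x \<in> Qcube"
  shows "bend_map c x \<in> Qcube"
  unfolding Qcube_iff bend_map_def
proof
  fix n
  have "x n \<in> {-1..1}" using assms by (simp add: Qcube_iff)
  then show "bend (c n x) (x n) \<in> {-1..1}"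
    using bend_image[OF bend_small[OF assms, of n]] by blast
qed

lemma bend_map_params: "x \<in> Qcube \<Longrightarrow> c n (bend_map c x) = c n x"
  by (rule depends[OF bend_map_in_Qcube]) (simp_all add: bend_map_def fixed)

lemma inj_on_bend_map: "inj_on (bend_map c) Qcube"
proof (rule inj_onI)
  fix x y assume x: "x \<in> Qcube" and y: "y \<in> Qcube" and eq: "bend_map c x = bend_map c y"
  have "c n x = c n y" for n
    using bend_map_params[OF x, of n] bend_map_params[OF y, of n] eq by simp
  then have bends_eq: "bend (c n x) (x n) = bend (c n x) (y n)" for n
    using fun_cong[OF eq, of n] by (simp add: bend_map_def)
  show "x = y"
  proof
    fix n
    show "x n = y n"
      using inj_onD[OF bend_inj_on[OF bend_small[OF x]] bends_eq[of n]] x y by (simp add: Qcube_iff)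
  qed
qed

lemma bend_map_image: "bend_map c ` Qcube = Qcube"
proof
  show "bend_map c ` Qcube \<subseteq> Qcube" using bend_map_in_Qcube by blast
  show "Qcube \<subseteq> bend_map c ` Qcube"
  proof
    fix y assume y: "y \<in> Qcube"
    have "\<forall>n. \<exists>v. v \<in> {-1..1} \<and> bend (c n y) v = y n"
      using bend_image[OF bend_small[OF y]] y by (metis Qcube_iff imageE)
    then obtain x where x: "\<And>n. x n \<in> {-1..1}" "\<And>n. bend (c n y) (x n) = y n"
      using choice[of "\<lambda>n v. v \<in> {-1..1} \<and> bend (c n y) v = y n"] by blast
    then have "x \<in> Qcube" by (simp add: Qcube_iff)
    have "c n x = c n y" for n
    proof (rule depends[OF \<open>x \<in> Qcube\<close> y])
      show "x j = y j" if "j \<in> U" for j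
        using x(2)[of j] that by (simp add: fixed)
    qed
    then have "bend_map c x = y"
      using x(2) by (simp add: bend_map_def)
    then show "y \<in> bend_map c ` Qcube"
      using \<open>x \<in> Qcube\<close> by blast
  qed
qed

end

lemma Q_automorphism_bend_map:
  assumes F: "free_filter F"
    and cont: "\<And>n. continuous_on Qcube (c n)"
    and small: "\<And>n x. x \<in> Qcube \<Longrightarrow> \<bar>c n x\<bar> \<le> \<delta> n"
    and half: "\<And>n. \<delta> n \<le> 1/2" and \<delta>: "\<delta> \<longlonglongrightarrow> 0"
    and fixed: "\<And>n x. n \<in> U \<Longrightarrow> c n x = 0"
    and depends: "\<And>n x y. x \<in> Qcube \<Longrightarrow> y \<in> Qcube \<Longrightarrow> (\<And>j. j \<in> U \<Longrightarrow> x j = y j) \<Longrightarrow> c n x = c n y"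
  shows "Q_automorphism F (bend_map c)"
proof -
  have bend_small: "\<bar>c n x\<bar> \<le> 1/2" if "x \<in> Qcube" for n x
    using small[OF that, of n] half[of n] by linarith
  have into: "bend_map c x \<in> Qcube" if "x \<in> Qcube" for x
    by (rule bend_map_in_Qcube[OF bend_small fixed depends that])
  show ?thesis
  proof (rule Q_automorphismI)
    show "inj_on (bend_map c) Qcube"
      by (rule inj_on_bend_map[OF bend_small fixed depends])
    show "bend_map c ` Qcube = Qcube"
      by (rule bend_map_image[OF bend_small fixed depends])
    show "continuous_on Qcube (bend_map c)"
      unfolding bend_map_def by (intro continuous_intros cont)
    show "bend_map c x \<in> Qopen \<longleftrightarrow> x \<in> Qopen" if "x \<in> Qcube" for x
      using bend_mem_open_iff[OF bend_small[OF that]] that by (simp add: bend_map_def Qopen_iff Qcube_iff)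
    show "bend_map c x \<in> K_filter F \<longleftrightarrow> x \<in> K_filter F" if "x \<in> Qcube" for x
    proof (rule K_filter_perturb_iff[OF F that into[OF that] _ \<delta>])
      show "\<bar>bend_map c x n - x n\<bar> \<le> \<delta> n" for n
        using abs_bend_minus_le[of "x n" "c n x"] small[OF that, of n] that
        by (simp add: bend_map_def Qcube_iff)
    qed
  qed
qed

definition tail_series :: "real \<Rightarrow> (nat \<Rightarrow> real) \<Rightarrow> real" where
  "tail_series t x = (\<Sum>j. t ^ Suc j * x (Suc j))"

lemma tail_series_term_bound:
  assumes "\<bar>t\<bar> \<le> 1/2" and "x \<in> Qcube"
  shows "norm (t ^ Suc j * x (Suc j)) \<le> (1/2) ^ Suc j"
proof -
  have "\<bar>t\<bar> ^ Suc j * \<bar>x (Suc j)\<bar> \<le> (1/2) ^ Suc j * 1"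
    using assms by (intro mult_mono power_mono) (auto simp: Qcube_iff abs_le_iff)
  then show ?thesis by (simp add: abs_mult power_abs)
qed

lemma summable_power_half_Suc: "summable (\<lambda>j. (1/2::real) ^ Suc j)"
  using power_half_series by (rule sums_summable)

lemma abs_tail_series_le:
  assumes "\<bar>t\<bar> \<le> 1/2" and "x \<in> Qcube"
  shows "\<bar>tail_series t x\<bar> \<le> 1"
proof -
  have summable: "summable (\<lambda>j. norm (t ^ Suc j * x (Suc j)))"
    using tail_series_term_bound[OF assms]
    by (intro summable_norm_comparison_test[OF _ summable_power_half_Suc]) blast
  have "\<bar>tail_series t x\<bar> \<le> (\<Sum>j. norm (t ^ Suc j * x (Suc j)))"
    unfolding tail_series_def using summable_norm[OF summable] by simp
  also have "\<dots> \<le> (\<Sum>j. (1/2) ^ Suc j)"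
    by (rule suminf_le[OF tail_series_term_bound[OF assms] summable summable_power_half_Suc])
  also have "\<dots> = 1"
    using power_half_series by (rule sums_unique[symmetric])
  finally show ?thesis .
qed

lemma continuous_on_tail_series:
  assumes "\<bar>t\<bar> \<le> 1/2"
  shows "continuous_on Qcube (tail_series t)"
proof -
  have "uniform_limit Qcube (\<lambda>n x. \<Sum>j<n. t ^ Suc j * x (Suc j)) (tail_series t) sequentially"
    unfolding tail_series_def
    by (rule Weierstrass_m_test[OF tail_series_term_bound[OF assms] summable_power_half_Suc])
  moreover have "\<forall>\<^sub>F n in sequentially. continuous_on Qcube (\<lambda>x. \<Sum>j<n. t ^ Suc j * x (Suc j))"
    by (intro always_eventually allI continuous_intros)
  ultimately show ?thesis
    using uniform_limit_theorem by fastforce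
qed

definition first_shift :: "real \<Rightarrow> (nat \<Rightarrow> real) \<Rightarrow> nat \<Rightarrow> real" where
  "first_shift t = bend_map (\<lambda>n x. if n = 0 then tail_series t x / 2 else 0)"

lemma Q_automorphism_first_shift:
  assumes F: "free_filter F" and t: "\<bar>t\<bar> \<le> 1/2"
  shows "Q_automorphism F (first_shift t)"
  unfolding first_shift_def
proof (rule Q_automorphism_bend_map[OF F, where \<delta> = "\<lambda>n. if n = 0 then 1/2 else 0" and U = "- {0}"])
  show "continuous_on Qcube (\<lambda>x. if n = 0 then tail_series t x / 2 else 0)" for n :: nat
    using continuous_on_tail_series[OF t] by (cases "n = 0") (simp_all add: continuous_on_divide)
  show "\<bar>if n = 0 then tail_series t x / 2 else 0\<bar> \<le> (if n = 0 then 1/2 else 0)" if "x \<in> Qcube" for n :: nat and x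
    using abs_tail_series_le[OF t that] by simp
  have "eventually (\<lambda>n. (if n = 0 then 1/2 else 0) = (0::real)) sequentially"
    using eventually_gt_at_top[of 0] by eventually_elim simp
  then show "(\<lambda>n. if n = 0 then 1/2 else 0::real) \<longlonglongrightarrow> 0"
    by (rule tendsto_eventually)
  show "(if n = 0 then tail_series t x / 2 else 0) = (if n = 0 then tail_series t y / 2 else 0)"
    if "\<And>j. j \<in> - {0} \<Longrightarrow> x j = y j" for n :: nat and x y
    using that by (simp add: tail_series_def)
qed auto

definition first_shift_coeff :: "(nat \<Rightarrow> real) \<Rightarrow> nat \<Rightarrow> real" where
  "first_shift_coeff x j = (if j = 0 then x 0 else (1 - (x 0)\<^sup>2) / 2 * x j)"

lemma first_shift_sums:
  assumes "\<bar>t\<bar> \<le> 1/2" and "x \<in> Qcube"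
  shows "(\<lambda>j. first_shift_coeff x j * t ^ j) sums first_shift t x 0"
proof -
  have "(\<lambda>j. t ^ Suc j * x (Suc j)) sums tail_series t x"
    unfolding tail_series_def
    by (rule summable_sums, rule summable_comparison_test'[OF summable_power_half_Suc])
       (rule tail_series_term_bound[OF assms])
  then have "(\<lambda>j. (1 - (x 0)\<^sup>2) / 2 * (t ^ Suc j * x (Suc j))) sums ((1 - (x 0)\<^sup>2) / 2 * tail_series t x)"
    by (rule sums_mult)
  moreover have "(\<lambda>j. (1 - (x 0)\<^sup>2) / 2 * (t ^ Suc j * x (Suc j))) = (\<lambda>j. first_shift_coeff x (Suc j) * t ^ Suc j)"
    by (simp add: first_shift_coeff_def fun_eq_iff mult_ac)
  ultimately have "(\<lambda>j. first_shift_coeff x (Suc j) * t ^ Suc j) sums ((1 - (x 0)\<^sup>2) / 2 * tail_series t x)"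
    by simp
  then have "(\<lambda>j. first_shift_coeff x j * t ^ j)
      sums ((1 - (x 0)\<^sup>2) / 2 * tail_series t x + first_shift_coeff x 0 * t ^ 0)"
    by (rule iffD1[OF sums_Suc_iff[of "\<lambda>j. first_shift_coeff x j * t ^ j"]])
  moreover have "(1 - (x 0)\<^sup>2) / 2 * tail_series t x + first_shift_coeff x 0 * t ^ 0 = first_shift t x 0"
    by (simp add: first_shift_coeff_def first_shift_def bend_map_def bend_def field_simps)
  ultimately show ?thesis by (simp only:)
qed

lemma abs_first_shift_coeff_le:
  assumes "x \<in> Qcube"
  shows "\<bar>first_shift_coeff x j\<bar> \<le> 1"
proof -
  have x: "\<bar>x 0\<bar> \<le> 1" "\<bar>x j\<bar> \<le> 1" using assms by (auto simp: Qcube_iff abs_le_iff)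
  then have "\<bar>1 - (x 0)\<^sup>2\<bar> \<le> 1"
    using abs_square_le_1[of "x 0"] by auto
  then have "\<bar>1 - (x 0)\<^sup>2\<bar> * \<bar>x j\<bar> \<le> 1 * 1"
    using x(2) by (intro mult_mono) auto
  then show ?thesis
    using x(1) by (simp add: first_shift_coeff_def abs_mult)
qed

lemma first_shift_coeff_inj_on: "inj_on first_shift_coeff Qopen"
proof (rule inj_onI)
  fix x y assume x: "x \<in> Qopen" and "y \<in> Qopen" and eq: "first_shift_coeff x = first_shift_coeff y"
  have x0: "x 0 = y 0" using fun_cong[OF eq, of 0] by (simp add: first_shift_coeff_def)
  have "\<bar>x 0\<bar> < 1" using x by (simp add: Qopen_iff abs_less_iff)
  then have "1 - (x 0)\<^sup>2 \<noteq> 0" using abs_square_less_1[of "x 0"] by simp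
  then have "x j = y j" for j
    using fun_cong[OF eq, of j] x0 by (cases "j = 0") (simp_all add: first_shift_coeff_def)
  then show "x = y" by blast
qed

lemma obtain_parameter_avoiding:
  fixes bad :: "real \<Rightarrow> 'a \<Rightarrow> 'a \<Rightarrow> bool"
  assumes "a < b" and "countable X"
    and "\<And>x y. x \<in> X \<Longrightarrow> y \<in> X \<Longrightarrow> x \<noteq> y \<Longrightarrow> countable {t \<in> {a<..<b}. bad t x y}"
  obtains t where "a < t" "t < b" "\<And>x y. x \<in> X \<Longrightarrow> y \<in> X \<Longrightarrow> x \<noteq> y \<Longrightarrow> \<not> bad t x y"
proof -
  define B where "B = (\<Union>x\<in>X. \<Union>y\<in>X - {x}. {t \<in> {a<..<b}. bad t x y})"
  have "countable B"
    unfolding B_def using assms(2,3) by (intro countable_UN) auto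
  then have "\<not> {a<..<b} \<subseteq> B"
    using uncountable_open_interval assms(1) countable_subset by blast
  then obtain t where "t \<in> {a<..<b}" "t \<notin> B" by blast
  then show ?thesis
    by (intro that) (auto simp: B_def)
qed

lemma first_shift_separates:
  assumes "X \<subseteq> Qopen" and "countable X"
  obtains t where "0 < t" "t < 1/2" "inj_on (\<lambda>x. first_shift t x 0) X"
proof -
  have bad_countable: "countable {t \<in> {0<..<1/2}. first_shift t x 0 = first_shift t y 0}"
    if "x \<in> X" "y \<in> X" "x \<noteq> y" for x y
  proof -
    have "x \<in> Qopen" "y \<in> Qopen" using that assms(1) by auto
    then have x: "x \<in> Qcube" and y: "y \<in> Qcube" using Qopen_subset_Qcube by auto
    have "first_shift_coeff x \<noteq> first_shift_coeff y"
      using inj_onD[OF first_shift_coeff_inj_on _ \<open>x \<in> Qopen\<close> \<open>y \<in> Qopen\<close>] that(3) by blast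
    then obtain k where k: "first_shift_coeff x k - first_shift_coeff y k \<noteq> 0"
      by (auto simp: fun_eq_iff)
    define d where "d j = first_shift_coeff x j - first_shift_coeff y j" for j
    have "\<bar>d j\<bar> \<le> 2" for j
      using abs_first_shift_coeff_le[OF x, of j] abs_first_shift_coeff_le[OF y, of j]
      by (simp add: d_def)
    then have "finite {t. \<bar>t\<bar> \<le> 1/2 \<and> (\<Sum>j. d j * t ^ j) = 0}"
      using k by (intro finite_zeros_real_power_series[of d 2 k]) (simp_all add: d_def)
    moreover have sums: "(\<lambda>j. d j * t ^ j) sums (first_shift t x 0 - first_shift t y 0)"
      if "\<bar>t\<bar> \<le> 1/2" for t
      using sums_diff[OF first_shift_sums[OF that x] first_shift_sums[OF that y]]
      by (simp add: d_def left_diff_distrib)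
    have "{t \<in> {0<..<1/2}. first_shift t x 0 = first_shift t y 0}
        \<subseteq> {t. \<bar>t\<bar> \<le> 1/2 \<and> (\<Sum>j. d j * t ^ j) = 0}"
    proof
      fix t assume "t \<in> {t \<in> {0<..<1/2}. first_shift t x 0 = first_shift t y 0}"
      then have "\<bar>t\<bar> \<le> 1/2" and "first_shift t x 0 - first_shift t y 0 = 0" by auto
      with sums[OF \<open>\<bar>t\<bar> \<le> 1/2\<close>] show "t \<in> {t. \<bar>t\<bar> \<le> 1/2 \<and> (\<Sum>j. d j * t ^ j) = 0}"
        by (simp add: sums_iff)
    qed
    ultimately show ?thesis
      by (rule countable_subset[OF _ countable_finite, rotated])
  qed
  obtain t where t: "0 < t" "t < 1/2"
    and separates: "\<And>x y. x \<in> X \<Longrightarrow> y \<in> X \<Longrightarrow> x \<noteq> y \<Longrightarrow> first_shift t x 0 \<noteq> first_shift t y 0"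
    by (rule obtain_parameter_avoiding[of 0 "1/2" X "\<lambda>t x y. first_shift t x 0 = first_shift t y 0",
          OF _ assms(2) bad_countable]) auto
  have "inj_on (\<lambda>x. first_shift t x 0) X"
    using separates by (intro inj_onI) blast
  with t show ?thesis by (rule that)
qed

definition tail_shear :: "real \<Rightarrow> (nat \<Rightarrow> real) \<Rightarrow> nat \<Rightarrow> real" where
  "tail_shear s = bend_map (\<lambda>n x. if n = 0 then 0 else s * (1/2) ^ n * x 0)"

lemma Q_automorphism_tail_shear:
  assumes F: "free_filter F" and s: "\<bar>s\<bar> \<le> 1/2"
  shows "Q_automorphism F (tail_shear s)"
  unfolding tail_shear_def
proof (rule Q_automorphism_bend_map[OF F, where \<delta> = "\<lambda>n. \<bar>s\<bar> * (1/2) ^ n" and U = "{0}"])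
  show "continuous_on Qcube (\<lambda>x. if n = 0 then 0 else s * (1/2) ^ n * x 0)" for n :: nat
    by (cases "n = 0") (simp_all add: continuous_on_mult_left continuous_on_coordinate)
  show "\<bar>if n = 0 then 0 else s * (1/2) ^ n * x 0\<bar> \<le> \<bar>s\<bar> * (1/2) ^ n" if "x \<in> Qcube" for n :: nat and x
  proof -
    have "\<bar>x 0\<bar> \<le> 1" using that by (simp add: Qcube_iff abs_le_iff)
    then have "\<bar>s\<bar> * (1/2) ^ n * \<bar>x 0\<bar> \<le> \<bar>s\<bar> * (1/2) ^ n" by (simp add: mult_left_le)
    then show ?thesis by (simp add: abs_mult)
  qed
  show "\<bar>s\<bar> * (1/2) ^ n \<le> 1/2" for n :: nat
    using s mult_mono[of "\<bar>s\<bar>" "1/2" "(1/2::real) ^ n" 1] by (simp add: power_le_one)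
  show "(\<lambda>n. \<bar>s\<bar> * (1/2::real) ^ n) \<longlonglongrightarrow> 0"
    by (rule tendsto_mult_right_zero[OF LIMSEQ_power_zero]) simp
qed auto

lemma finite_tail_shear_coincidences:
  assumes "x \<in> Qopen" and "x 0 \<noteq> y 0"
  shows "finite {s. tail_shear s x n = tail_shear s y n}"
proof (cases "n = 0")
  case True
  then show ?thesis using assms(2) by (simp add: tail_shear_def bend_map_def)
next
  case False
  have "\<bar>x n\<bar> < 1" using assms(1) by (simp add: Qopen_iff abs_less_iff)
  then have "1 - (x n)\<^sup>2 \<noteq> 0" using abs_square_less_1[of "x n"] by simp
  have slope: "(1/2) ^ n * (x 0 * (1 - (x n)\<^sup>2) - y 0 * (1 - (y n)\<^sup>2)) \<noteq> 0" if "x n = y n"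
  proof -
    have "x 0 * (1 - (x n)\<^sup>2) - y 0 * (1 - (y n)\<^sup>2) = (1 - (x n)\<^sup>2) * (x 0 - y 0)"
      using that by (simp add: algebra_simps)
    then show ?thesis using \<open>1 - (x n)\<^sup>2 \<noteq> 0\<close> assms(2) by simp
  qed
  let ?p = "[: x n - y n, (1/2) ^ n * (x 0 * (1 - (x n)\<^sup>2) - y 0 * (1 - (y n)\<^sup>2)) :]"
  have "?p \<noteq> 0" using slope by (cases "x n = y n") simp_all
  then have "finite {s. poly ?p s = 0}" by (rule poly_roots_finite)
  moreover have "{s. tail_shear s x n = tail_shear s y n} \<subseteq> {s. poly ?p s = 0}"
  proof
    fix s assume "s \<in> {s. tail_shear s x n = tail_shear s y n}"
    moreover have "tail_shear s x n - tail_shear s y n = poly ?p s"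
      using False by (simp add: tail_shear_def bend_map_def bend_def algebra_simps)
    ultimately show "s \<in> {s. poly ?p s = 0}" by simp
  qed
  ultimately show ?thesis by (rule finite_subset[rotated])
qed

lemma tail_shear_general_position:
  assumes "X \<subseteq> Qopen" and "countable X" and "inj_on (\<lambda>x. x 0) X"
  obtains s where "0 < s" "s < 1/2" "general_position (tail_shear s ` X)"
proof -
  have bad_countable: "countable {s \<in> {0<..<1/2}. \<exists>n. tail_shear s x n = tail_shear s y n}"
    if "x \<in> X" "y \<in> X" "x \<noteq> y" for x y
  proof -
    have "x 0 \<noteq> y 0" using inj_onD[OF assms(3) _ that(1,2)] that(3) by blast
    moreover have "x \<in> Qopen" using that(1) assms(1) by blast
    ultimately have "countable (\<Union>n. {s. tail_shear s x n = tail_shear s y n})"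
      using finite_tail_shear_coincidences[of x y] by (intro countable_UN) (auto intro: countable_finite)
    then show ?thesis by (rule countable_subset[rotated]) blast
  qed
  obtain s where s: "0 < s" "s < 1/2"
    and separates: "\<And>x y. x \<in> X \<Longrightarrow> y \<in> X \<Longrightarrow> x \<noteq> y \<Longrightarrow> \<not> (\<exists>n. tail_shear s x n = tail_shear s y n)"
    by (rule obtain_parameter_avoiding[of 0 "1/2" X "\<lambda>s x y. \<exists>n. tail_shear s x n = tail_shear s y n",
          OF _ assms(2) bad_countable]) auto
  have "general_position (tail_shear s ` X)"
    unfolding general_position_def
  proof (intro ballI impI allI)
    fix a b n assume "a \<in> tail_shear s ` X" "b \<in> tail_shear s ` X" "a \<noteq> b"
    then obtain x y where "x \<in> X" "y \<in> X" "x \<noteq> y" "a = tail_shear s x" "b = tail_shear s y"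
      by blast
    then show "a n \<noteq> b n" using separates by blast
  qed
  with s show ?thesis by (rule that)
qed

theorem mainTheorem12:
  fixes F :: "nat set set" and D :: "(nat \<Rightarrow> real) set"
  assumes "free_filter F"
    and "D \<subseteq> Qopen"
    and "countable D"
  shows "\<exists>h. homeomorphic_map Qtop Qtop h \<and> general_position (h ` D)
           \<and> h ` Qopen = Qopen \<and> h ` K_filter F = K_filter F"
proof -
  obtain t where t: "0 < t" "t < 1/2" and separated: "inj_on (\<lambda>x. first_shift t x 0) D"
    using first_shift_separates[OF assms(2,3)] .
  have shift: "Q_automorphism F (first_shift t)"
    using Q_automorphism_first_shift[OF assms(1)] t by simp
  let ?D = "first_shift t ` D"
  have "?D \<subseteq> Qopen" using shift assms(2) by (auto simp: Q_automorphism_def)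
  moreover have "countable ?D" using assms(3) by simp
  moreover have "inj_on (\<lambda>x. x 0) ?D" using separated by (intro inj_on_imageI) (simp add: comp_def)
  ultimately obtain s where s: "0 < s" "s < 1/2" and "general_position (tail_shear s ` ?D)"
    by (rule tail_shear_general_position)
  moreover have "Q_automorphism F (tail_shear s \<circ> first_shift t)"
    using Q_automorphism_comp[OF shift Q_automorphism_tail_shear[OF assms(1)]] s by simp
  ultimately show ?thesis
    unfolding Q_automorphism_def by (intro exI[of _ "tail_shear s \<circ> first_shift t"]) (simp add: image_comp)
qed

end
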